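(* Let $E$ be an arbitrary directed graph and $(H,S)$ an admissible pair of $E$ with $H=H^{\bot\bot}$. Then $S^{\bot\bot}=B_H$.
   Context: Write $u\ge v$ if there is a path (possibly of length 0) from $u$ to $v$; $R(V)=\{u\mid u\ge v$ for some $v\in V\}$. $H\subseteq E^0$ is hereditary if closed under following paths; saturated if every vertex emitting a nonzero finite number of edges, all with ranges in $H$, lies in $H$. For hereditary saturated $H$, $B_H=\{v\in E^0-H\mid v$ emits infinitely many edges and $\mathbf{s}^{-1}(v)\cap\mathbf{r}^{-1}(E^0-H)$ is nonempty and finite$\}$. An admissible pair is $(H,S)$, $H$ hereditary saturated, $S\subseteq B_H$. For such a pair, $H^\bot=E^0-R(H)$, $S^\bot=B_{H^\bot}-S$, $H^{\bot\bot}=E^0-R(H^\bot)$, and $S^{\bot\bot}=B_{H^{\bot\bot}}-S^\bot$. *)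

theory Defs
  imports Main
begin

definition graph :: "'v set \<Rightarrow> 'e set \<Rightarrow> ('e \<Rightarrow> 'v) \<Rightarrow> ('e \<Rightarrow> 'v) \<Rightarrow> bool" where
  "graph E0 E1 s r \<longleftrightarrow> (\<forall>e\<in>E1. s e \<in> E0 \<and> r e \<in> E0)"

definition edge_rel :: "'e set \<Rightarrow> ('e \<Rightarrow> 'v) \<Rightarrow> ('e \<Rightarrow> 'v) \<Rightarrow> ('v \<times> 'v) set" where
  "edge_rel E1 s r = {(s e, r e) | e. e \<in> E1}"

definition path_geq :: "'e set \<Rightarrow> ('e \<Rightarrow> 'v) \<Rightarrow> ('e \<Rightarrow> 'v) \<Rightarrow> 'v \<Rightarrow> 'v \<Rightarrow> bool" where
  "path_geq E1 s r u v \<longleftrightarrow> (u, v) \<in> (edge_rel E1 s r)\<^sup>*"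

definition Rset :: "'v set \<Rightarrow> 'e set \<Rightarrow> ('e \<Rightarrow> 'v) \<Rightarrow> ('e \<Rightarrow> 'v) \<Rightarrow> 'v set \<Rightarrow> 'v set" where
  "Rset E0 E1 s r V = {u \<in> E0. \<exists>v\<in>V. path_geq E1 s r u v}"

definition emits :: "'e set \<Rightarrow> ('e \<Rightarrow> 'v) \<Rightarrow> 'v \<Rightarrow> 'e set" where
  "emits E1 s v = {e \<in> E1. s e = v}"

definition hereditary :: "'v set \<Rightarrow> 'e set \<Rightarrow> ('e \<Rightarrow> 'v) \<Rightarrow> ('e \<Rightarrow> 'v) \<Rightarrow> 'v set \<Rightarrow> bool" where
  "hereditary E0 E1 s r H \<longleftrightarrow> H \<subseteq> E0 \<and> (\<forall>u\<in>H. \<forall>v. path_geq E1 s r u v \<longrightarrow> v \<in> H)"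

definition saturated :: "'v set \<Rightarrow> 'e set \<Rightarrow> ('e \<Rightarrow> 'v) \<Rightarrow> ('e \<Rightarrow> 'v) \<Rightarrow> 'v set \<Rightarrow> bool" where
  "saturated E0 E1 s r H \<longleftrightarrow>
     (\<forall>v\<in>E0. emits E1 s v \<noteq> {} \<and> finite (emits E1 s v) \<and> r ` emits E1 s v \<subseteq> H \<longrightarrow> v \<in> H)"

definition B_set :: "'v set \<Rightarrow> 'e set \<Rightarrow> ('e \<Rightarrow> 'v) \<Rightarrow> ('e \<Rightarrow> 'v) \<Rightarrow> 'v set \<Rightarrow> 'v set" where
  "B_set E0 E1 s r H = {v \<in> E0 - H. infinite (emits E1 s v)
      \<and> {e \<in> emits E1 s v. r e \<in> E0 - H} \<noteq> {}
      \<and> finite {e \<in> emits E1 s v. r e \<in> E0 - H}}"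

definition admissible :: "'v set \<Rightarrow> 'e set \<Rightarrow> ('e \<Rightarrow> 'v) \<Rightarrow> ('e \<Rightarrow> 'v) \<Rightarrow> 'v set \<Rightarrow> 'v set \<Rightarrow> bool" where
  "admissible E0 E1 s r H S \<longleftrightarrow> hereditary E0 E1 s r H \<and> saturated E0 E1 s r H \<and> S \<subseteq> B_set E0 E1 s r H"

definition Hperp :: "'v set \<Rightarrow> 'e set \<Rightarrow> ('e \<Rightarrow> 'v) \<Rightarrow> ('e \<Rightarrow> 'v) \<Rightarrow> 'v set \<Rightarrow> 'v set" where
  "Hperp E0 E1 s r H = E0 - Rset E0 E1 s r H"

definition Sperp :: "'v set \<Rightarrow> 'e set \<Rightarrow> ('e \<Rightarrow> 'v) \<Rightarrow> ('e \<Rightarrow> 'v) \<Rightarrow> 'v set \<Rightarrow> 'v set \<Rightarrow> 'v set" where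
  "Sperp E0 E1 s r H S = B_set E0 E1 s r (Hperp E0 E1 s r H) - S"

definition Hperpperp :: "'v set \<Rightarrow> 'e set \<Rightarrow> ('e \<Rightarrow> 'v) \<Rightarrow> ('e \<Rightarrow> 'v) \<Rightarrow> 'v set \<Rightarrow> 'v set" where
  "Hperpperp E0 E1 s r H = E0 - Rset E0 E1 s r (Hperp E0 E1 s r H)"

definition Sperpperp :: "'v set \<Rightarrow> 'e set \<Rightarrow> ('e \<Rightarrow> 'v) \<Rightarrow> ('e \<Rightarrow> 'v) \<Rightarrow> 'v set \<Rightarrow> 'v set \<Rightarrow> 'v set" where
  "Sperpperp E0 E1 s r H S =
     B_set E0 E1 s r (Hperpperp E0 E1 s r H) - Sperp E0 E1 s r H S"

end

theory Submission
  imports Defs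
begin

lemma subset_Rset:
  assumes "H \<subseteq> E0"
  shows "H \<subseteq> Rset E0 E1 s r H"
  using assms by (auto simp: Rset_def path_geq_def)

lemma Hperp_disjoint:
  assumes "H \<subseteq> E0"
  shows "H \<inter> Hperp E0 E1 s r H = {}"
  using subset_Rset [OF assms] by (auto simp: Hperp_def)

text \<open>Every edge leaving v has its range outside H or outside K, so if v had only finitely many
  edges into both complements it would emit only finitely many edges.\<close>

lemma B_set_disjoint:
  assumes "graph E0 E1 s r" and "H \<inter> K = {}"
  shows "B_set E0 E1 s r H \<inter> B_set E0 E1 s r K = {}"
proof (intro equalityI subsetI)
  fix v
  assume v: "v \<in> B_set E0 E1 s r H \<inter> B_set E0 E1 s r K"
  let ?out_H = "{e \<in> emits E1 s v. r e \<in> E0 - H}"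
  let ?out_K = "{e \<in> emits E1 s v. r e \<in> E0 - K}"
  have "emits E1 s v \<subseteq> ?out_H \<union> ?out_K"
    using assms by (auto simp: graph_def emits_def)
  moreover have "finite ?out_H" and "finite ?out_K"
    using v by (auto simp: B_set_def)
  ultimately have "finite (emits E1 s v)"
    by (meson finite_UnI finite_subset)
  with v show "v \<in> {}"
    by (simp add: B_set_def)
qed simp

theorem lemma3p9:
  fixes E0 :: "'v set" and E1 :: "'e set" and s r :: "'e \<Rightarrow> 'v" and H S :: "'v set"
  assumes "graph E0 E1 s r"
    and "admissible E0 E1 s r H S"
    and "H = Hperpperp E0 E1 s r H"
  shows "Sperpperp E0 E1 s r H S = B_set E0 E1 s r H"
proof -
  have "H \<subseteq> E0"
    using assms(2) by (simp add: admissible_def hereditary_def)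
  then have disjoint: "B_set E0 E1 s r H \<inter> B_set E0 E1 s r (Hperp E0 E1 s r H) = {}"
    using B_set_disjoint [OF assms(1) Hperp_disjoint] by blast
  have "Sperpperp E0 E1 s r H S = B_set E0 E1 s r H - (B_set E0 E1 s r (Hperp E0 E1 s r H) - S)"
    using assms(3) by (simp add: Sperpperp_def Sperp_def)
  also have "\<dots> = B_set E0 E1 s r H"
    using disjoint by blast
  finally show ?thesis .
qed

end
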